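(* Let $G$ be a finite group and $S\in\mathcal F(G)$. (1) If $[S]$ is an idempotent of $\mathcal C(\mathcal B(G),\mathcal F(G))$, then $\pi(S)$ is a subgroup of $G$ contained in $G'$. (2) $[1_{\mathcal F(G)}]=\mathcal B(\mathsf Z(G))$. In particular, if $g\in\mathsf Z(G)$ then $g^{[\mathrm{ord}(g)]}\sim 1_{\mathcal F(G)}$. (3) $[S]$ is the smallest element of the set of idempotents of $\mathcal C(\mathcal B(G),\mathcal F(G))$ with respect to the Rees order if and only if $\pi(S)=G'$.
   Context: Let $G$ be a finite group written multiplicatively with identity $1_G$; $G'$ is its commutator subgroup and $\mathsf Z(G)$ its center. For $G_0\subset G$, $\mathcal F(G_0)$ is the free abelian monoid with basis $G_0$; its elements are sequences $S=g_1\boldsymbol{\cdot}\ldots\boldsymbol{\cdot}g_\ell$ (operation $\boldsymbol{\cdot}$ = concatenation, identity the empty sequence $1_{\mathcal F(G)}$; $g^{[k]}$ is the sequence consisting of $k$ copies of $g$). $\pi(S)=\{g_{\tau(1)}\cdots g_{\tau(\ell)}:\tau\text{ a permutation of }[1,\ell]\}$, $\pi(1_{\mathcal F(G)})=\{1_G\}$, and $\mathcal B(G_0)=\{S\in\mathcal F(G_0):1_G\in\pi(S)\}$. For $S,S'\in\mathcal F(G)$, $S\sim S'$ means: for all $T\in\mathcal F(G)$, $S\boldsymbol{\cdot}T\in\mathcal B(G)\iff S'\boldsymbol{\cdot}T\in\mathcal B(G)$; this is a congruence, $[S]$ is the class of $S$, and $\mathcal C(\mathcal B(G),\mathcal F(G))$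 is the set of classes, a commutative semigroup written additively with $[S]+[T]=[S\boldsymbol{\cdot}T]$. The Rees order on idempotents of a commutative semigroup is $e\le f$ iff $e+f=e$. *)

theory Defs
  imports "HOL-Algebra.Algebra" "HOL-Library.Multiset"
begin

definition grp_center :: "('a, 'b) monoid_scheme \<Rightarrow> 'a set" where
  "grp_center G = {z \<in> carrier G. \<forall>x \<in> carrier G. z \<otimes>\<^bsub>G\<^esub> x = x \<otimes>\<^bsub>G\<^esub> z}"

(* F(G0): sequences (finite multisets) over G0 *)
definition seqs :: "'a set \<Rightarrow> 'a multiset set" where
  "seqs G0 = {S. set_mset S \<subseteq> G0}"

definition lprod :: "('a, 'b) monoid_scheme \<Rightarrow> 'a list \<Rightarrow> 'a" where
  "lprod G xs = foldr (\<lambda>x y. x \<otimes>\<^bsub>G\<^esub> y) xs \<one>\<^bsub>G\<^esub>"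

definition seq_prods :: "('a, 'b) monoid_scheme \<Rightarrow> 'a multiset \<Rightarrow> 'a set" where
  "seq_prods G S = {lprod G xs | xs. mset xs = S}"

definition prod_one_seqs :: "('a, 'b) monoid_scheme \<Rightarrow> 'a set \<Rightarrow> 'a multiset set" where
  "prod_one_seqs G G0 = {S \<in> seqs G0. \<one>\<^bsub>G\<^esub> \<in> seq_prods G S}"

definition seq_equiv :: "('a, 'b) monoid_scheme \<Rightarrow> 'a multiset \<Rightarrow> 'a multiset \<Rightarrow> bool" where
  "seq_equiv G S S' = (\<forall>T \<in> seqs (carrier G).
      (S + T \<in> prod_one_seqs G (carrier G)) = (S' + T \<in> prod_one_seqs G (carrier G)))"

definition seq_class :: "('a, 'b) monoid_scheme \<Rightarrow> 'a multiset \<Rightarrow> 'a multiset set" where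
  "seq_class G S = {T \<in> seqs (carrier G). seq_equiv G S T}"

definition class_semigroup :: "('a, 'b) monoid_scheme \<Rightarrow> 'a multiset set set" where
  "class_semigroup G = seq_class G ` seqs (carrier G)"

definition class_add :: "('a, 'b) monoid_scheme \<Rightarrow> 'a multiset set \<Rightarrow> 'a multiset set \<Rightarrow> 'a multiset set" where
  "class_add G A B = seq_class G ((SOME S. S \<in> A) + (SOME T. T \<in> B))"

definition class_idems :: "('a, 'b) monoid_scheme \<Rightarrow> 'a multiset set set" where
  "class_idems G = {e \<in> class_semigroup G. class_add G e e = e}"

definition rees_le :: "('a, 'b) monoid_scheme \<Rightarrow> 'a multiset set \<Rightarrow> 'a multiset set \<Rightarrow> bool" where
  "rees_le G e f = (class_add G e f = e)"

end

theory Submission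
  imports Defs
begin

text \<open>
  All orderings of a sequence S have the same image in the abelianization G/G', so \<pi>(S) lies in
  a single coset of G'. Moreover 1 \<in> \<pi>(S \<cdot> x) iff x\<inverse> \<in> \<pi>(S) (rotate a product-one
  ordering), hence equivalent sequences have the same set of products. For an idempotent [S] this
  makes \<pi>(S) = \<pi>(S \<cdot> S) closed under multiplication, so a subgroup, and since it contains 1
  the coset it lies in is G'. A sequence S with \<pi>(S) = G' exists because every commutator and
  1 are products of the sequence a \<cdot> b \<cdot> a\<inverse> \<cdot> b\<inverse>, and sequences with product one can be
  concatenated without losing products. For such S, S \<cdot> U is product-one iff \<pi>(U) \<subseteq> G', which
  shows S \<cdot> T \<sim> S whenever \<pi>(T) \<subseteq> G'; this gives the minimality statement. Finally, T \<sim> 1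
  forces every g in T to be central: adjoining x and (g x g\<inverse>)\<inverse> to T gives a product-one
  sequence, so x (g x g\<inverse>)\<inverse> = 1; conversely a central product-one T can be moved out of any
  product.
\<close>

lemma lprod_Nil [simp]: "lprod G [] = \<one>\<^bsub>G\<^esub>"
  by (simp add: lprod_def)

lemma lprod_Cons [simp]: "lprod G (x # xs) = x \<otimes>\<^bsub>G\<^esub> lprod G xs"
  by (simp add: lprod_def)

lemma seq_prodsI: "mset xs = S \<Longrightarrow> lprod G xs = a \<Longrightarrow> a \<in> seq_prods G S"
  unfolding seq_prods_def by auto

lemma seq_prodsE:
  assumes "a \<in> seq_prods G S"
  obtains xs where "mset xs = S" "lprod G xs = a"
  using assms unfolding seq_prods_def by auto

lemma seq_prods_nonempty: "seq_prods G S \<noteq> {}"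
  using ex_mset[of S] unfolding seq_prods_def by auto

lemma seqs_empty [simp]: "{#} \<in> seqs A"
  by (simp add: seqs_def)

lemma seqs_add [simp]: "S + T \<in> seqs A \<longleftrightarrow> S \<in> seqs A \<and> T \<in> seqs A"
  by (auto simp: seqs_def)

lemma seqs_add_mset [simp]: "add_mset x S \<in> seqs A \<longleftrightarrow> x \<in> A \<and> S \<in> seqs A"
  by (simp add: seqs_def)

lemma seqs_mset_iff [simp]: "mset xs \<in> seqs A \<longleftrightarrow> set xs \<subseteq> A"
  by (simp add: seqs_def)

lemma seqs_set_subset: "S \<in> seqs A \<Longrightarrow> mset xs = S \<Longrightarrow> set xs \<subseteq> A"
  unfolding seqs_def by auto

lemma mset_eq_pair_iff: "mset xs = {#x, y#} \<longleftrightarrow> xs = [x, y] \<or> xs = [y, x]"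
proof
  assume "mset xs = {#x, y#}"
  moreover from this obtain p q where "xs = [p, q]"
    by (metis size_mset size_add_mset size_empty length_0_conv length_Suc_conv)
  ultimately show "xs = [x, y] \<or> xs = [y, x]"
    by (auto simp: add_eq_conv_ex)
qed auto

lemma grp_center_subset_carrier: "grp_center G \<subseteq> carrier G"
  by (auto simp: grp_center_def)

lemma (in comm_monoid) grp_center_eq_carrier: "grp_center G = carrier G"
  by (auto simp: grp_center_def m_comm)

lemma seq_equiv_refl [simp]: "seq_equiv G S S"
  by (simp add: seq_equiv_def)

lemma seq_equiv_sym: "seq_equiv G S T \<Longrightarrow> seq_equiv G T S"
  by (simp add: seq_equiv_def)

lemma seq_equiv_trans: "seq_equiv G S T \<Longrightarrow> seq_equiv G T U \<Longrightarrow> seq_equiv G S U"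
  by (simp add: seq_equiv_def)

lemma seq_equivD:
  "seq_equiv G S S' \<Longrightarrow> T \<in> seqs (carrier G) \<Longrightarrow>
    S + T \<in> prod_one_seqs G (carrier G) \<longleftrightarrow> S' + T \<in> prod_one_seqs G (carrier G)"
  by (simp add: seq_equiv_def)

lemma seq_equiv_add:
  assumes "S' \<in> seqs (carrier G)" "T \<in> seqs (carrier G)"
    and "seq_equiv G S S'" "seq_equiv G T T'"
  shows "seq_equiv G (S + T) (S' + T')"
  unfolding seq_equiv_def
proof
  fix U assume U: "U \<in> seqs (carrier G)"
  have "S + T + U \<in> prod_one_seqs G (carrier G) \<longleftrightarrow> S' + (T + U) \<in> prod_one_seqs G (carrier G)"
    using seq_equivD[OF assms(3), of "T + U"] assms(2) U by (simp add: add.assoc)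
  also have "\<dots> \<longleftrightarrow> T + (S' + U) \<in> prod_one_seqs G (carrier G)"
    by (simp add: add_ac)
  also have "\<dots> \<longleftrightarrow> T' + (S' + U) \<in> prod_one_seqs G (carrier G)"
    using seq_equivD[OF assms(4), of "S' + U"] assms(1) U by simp
  finally show "S + T + U \<in> prod_one_seqs G (carrier G) \<longleftrightarrow> S' + T' + U \<in> prod_one_seqs G (carrier G)"
    by (simp add: add_ac)
qed

lemma seq_class_eq_iff:
  "T \<in> seqs (carrier G) \<Longrightarrow> seq_class G S = seq_class G T \<longleftrightarrow> seq_equiv G S T"
  unfolding seq_class_def by (blast intro: seq_equiv_sym seq_equiv_trans seq_equiv_refl)

lemma seq_class_self: "S \<in> seqs (carrier G) \<Longrightarrow> S \<in> seq_class G S"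
  by (simp add: seq_class_def)

lemma class_add_seq_class:
  assumes "S \<in> seqs (carrier G)" "T \<in> seqs (carrier G)"
  shows "class_add G (seq_class G S) (seq_class G T) = seq_class G (S + T)"
proof -
  define S' T' where "S' = (SOME S'. S' \<in> seq_class G S)" and "T' = (SOME T'. T' \<in> seq_class G T)"
  have "S' \<in> seq_class G S" "T' \<in> seq_class G T"
    unfolding S'_def T'_def using assms by (auto intro: someI seq_class_self)
  then have "seq_equiv G (S' + T') (S + T)"
    using assms by (intro seq_equiv_add) (auto simp: seq_class_def intro: seq_equiv_sym)
  then show ?thesis
    unfolding class_add_def S'_def[symmetric] T'_def[symmetric]
    using seq_class_eq_iff[of "S + T" G "S' + T'"] assms by simp
qed

lemma seq_class_in_class_idems_iff:
  assumes "S \<in> seqs (carrier G)"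
  shows "seq_class G S \<in> class_idems G \<longleftrightarrow> seq_equiv G (S + S) S"
  using assms seq_class_eq_iff[OF assms, of "S + S"]
  by (auto simp: class_idems_def class_semigroup_def class_add_seq_class)

lemma class_idemsE:
  assumes "e \<in> class_idems G"
  obtains T where "T \<in> seqs (carrier G)" "e = seq_class G T" "seq_equiv G (T + T) T"
  using assms seq_class_in_class_idems_iff unfolding class_idems_def class_semigroup_def
  by blast

lemma rees_le_seq_class_iff:
  assumes "S \<in> seqs (carrier G)" "T \<in> seqs (carrier G)"
  shows "rees_le G (seq_class G S) (seq_class G T) \<longleftrightarrow> seq_equiv G (S + T) S"
  using assms seq_class_eq_iff[OF assms(1), of "S + T"]
  by (auto simp: rees_le_def class_add_seq_class intro: seq_equiv_sym)

context monoid
begin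

lemma lprod_closed [simp]: "set xs \<subseteq> carrier G \<Longrightarrow> lprod G xs \<in> carrier G"
  by (induction xs) auto

lemma lprod_append:
  "set xs \<subseteq> carrier G \<Longrightarrow> set ys \<subseteq> carrier G \<Longrightarrow> lprod G (xs @ ys) = lprod G xs \<otimes> lprod G ys"
  by (induction xs) (auto simp: m_assoc)

lemma seq_prods_subset_carrier: "S \<in> seqs (carrier G) \<Longrightarrow> seq_prods G S \<subseteq> carrier G"
  by (auto elim!: seq_prodsE dest: seqs_set_subset)

lemma seq_prods_singleton: "x \<in> carrier G \<Longrightarrow> seq_prods G {#x#} = {x}"
  by (auto simp: seq_prods_def)

lemma seq_prods_pair:
  assumes "x \<in> carrier G" "y \<in> carrier G"
  shows "seq_prods G {#x, y#} = {x \<otimes> y, y \<otimes> x}"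
proof -
  have "seq_prods G {#x, y#} = {lprod G [x, y], lprod G [y, x]}"
    unfolding seq_prods_def mset_eq_pair_iff by blast
  with assms show ?thesis
    by simp
qed

lemma seq_prods_add:
  assumes "S \<in> seqs (carrier G)" "T \<in> seqs (carrier G)"
    and "a \<in> seq_prods G S" "b \<in> seq_prods G T"
  shows "a \<otimes> b \<in> seq_prods G (S + T)"
proof -
  obtain xs ys where "mset xs = S" "lprod G xs = a" "mset ys = T" "lprod G ys = b"
    using assms(3,4) by (auto elim!: seq_prodsE)
  with assms(1,2) show ?thesis
    by (intro seq_prodsI[of "xs @ ys"]) (auto simp: lprod_append)
qed

lemma lprod_eq_central_mult_remove1:
  assumes "x \<in> grp_center G" "x \<in> set w" "set w \<subseteq> carrier G"
  shows "lprod G w = x \<otimes> lprod G (remove1 x w)"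
  using assms
proof (induction w)
  case (Cons y w)
  show ?case
  proof (cases "y = x")
    case False
    with Cons have "y \<otimes> x = x \<otimes> y" "x \<in> carrier G" "set (remove1 x w) \<subseteq> carrier G"
      by (auto simp: grp_center_def dest: subsetD[OF set_remove1_subset])
    with False Cons show ?thesis
      by (simp add: m_assoc[symmetric])
  qed simp
qed simp

lemma lprod_split_central:
  assumes "set t \<subseteq> grp_center G" "mset w = mset t + U" "set w \<subseteq> carrier G"
  obtains u where "mset u = U" "lprod G w = lprod G t \<otimes> lprod G u"
  using assms
proof (induction t arbitrary: w thesis)
  case Nil
  then show ?case
    by auto
next
  case (Cons x t)
  have "x \<in> set w"
    using arg_cong[OF Cons.prems(3), of set_mset] by simp
  with Cons.prems have w: "lprod G w = x \<otimes> lprod G (remove1 x w)"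
    by (intro lprod_eq_central_mult_remove1) auto
  have rest: "mset (remove1 x w) = mset t + U" "set (remove1 x w) \<subseteq> carrier G"
    using Cons.prems(3,4) set_remove1_subset[of x w] by auto
  then obtain u where u: "mset u = U" "lprod G (remove1 x w) = lprod G t \<otimes> lprod G u"
    using Cons.IH[of "remove1 x w"] Cons.prems(2) rest by auto
  have "set u \<subseteq> set (remove1 x w)"
    using rest(1) u(1) by (metis mset_subset_eq_add_right set_mset_mono set_mset_mset)
  then have "set t \<subseteq> carrier G" "set u \<subseteq> carrier G" "x \<in> carrier G"
    using Cons.prems(2) grp_center_subset_carrier[of G] rest(2) by auto
  with Cons.prems(1) w u show ?case
    by (simp add: m_assoc)
qed

lemma lprod_perm_central:
  assumes "set xs \<subseteq> grp_center G" "mset ys = mset xs"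
  shows "lprod G ys = lprod G xs"
proof -
  have "set ys \<subseteq> carrier G"
    using assms grp_center_subset_carrier[of G] by (metis set_mset_mset order_trans)
  then obtain u where "mset u = {#}" "lprod G ys = lprod G xs \<otimes> lprod G u"
    using lprod_split_central[of xs ys "{#}"] assms by auto
  with assms grp_center_subset_carrier[of G] show ?thesis
    by auto
qed

lemma seq_prods_add_central:
  assumes "set t \<subseteq> grp_center G" "U \<in> seqs (carrier G)"
  shows "seq_prods G (mset t + U) = (\<otimes>) (lprod G t) ` seq_prods G U"
proof
  have t: "mset t \<in> seqs (carrier G)"
    using assms(1) grp_center_subset_carrier[of G] by auto
  show "seq_prods G (mset t + U) \<subseteq> (\<otimes>) (lprod G t) ` seq_prods G U"
  proof
    fix a assume "a \<in> seq_prods G (mset t + U)"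
    then obtain w where w: "mset w = mset t + U" "lprod G w = a"
      by (rule seq_prodsE)
    moreover have "set w \<subseteq> carrier G"
      using t assms(2) w(1) by (intro seqs_set_subset) auto
    ultimately obtain u where "mset u = U" "a = lprod G t \<otimes> lprod G u"
      using lprod_split_central[OF assms(1)] by metis
    then show "a \<in> (\<otimes>) (lprod G t) ` seq_prods G U"
      by (auto intro: seq_prodsI)
  qed
  show "(\<otimes>) (lprod G t) ` seq_prods G U \<subseteq> seq_prods G (mset t + U)"
    using t assms(2) by (auto intro: seq_prods_add seq_prodsI)
qed

end

lemma (in group_hom) lprod_hom:
  "set xs \<subseteq> carrier G \<Longrightarrow> h (lprod G xs) = lprod H (map h xs)"
  by (induction xs) auto

context group
begin

text \<open>Both products have the same image in the abelian quotient G/G'.\<close>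

lemma lprod_perm_in_derived:
  assumes "mset ys = mset xs" "set xs \<subseteq> carrier G"
  shows "lprod G ys \<otimes> inv (lprod G xs) \<in> derived G (carrier G)"
proof -
  let ?N = "derived G (carrier G)" and ?q = "\<lambda>a. derived G (carrier G) #> a"
  interpret N: normal ?N G
    by (rule derived_self_is_normal)
  interpret Q: comm_group "G Mod ?N"
    by (rule derived_quot_is_comm_group)
  interpret q: group_hom G "G Mod ?N" ?q
    by unfold_locales (rule N.r_coset_hom_Mod)
  have ys: "set ys \<subseteq> carrier G"
    using assms by (metis set_mset_mset)
  have "?q (lprod G ys) = lprod (G Mod ?N) (map ?q ys)"
    using ys by (rule q.lprod_hom)
  also have "\<dots> = lprod (G Mod ?N) (map ?q xs)"
    using assms by (intro Q.lprod_perm_central) (auto simp: Q.grp_center_eq_carrier)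
  also have "\<dots> = ?q (lprod G xs)"
    using assms(2) by (rule q.lprod_hom[symmetric])
  finally have "lprod G ys \<in> ?q (lprod G xs)"
    using ys rcos_self[OF _ N.subgroup_axioms] by (metis lprod_closed)
  then show ?thesis
    using assms(2) by (intro N.rcos_module_imp) (auto intro: is_group)
qed

lemma seq_prods_subset_derived_iff:
  assumes "S \<in> seqs (carrier G)" "a \<in> seq_prods G S"
  shows "seq_prods G S \<subseteq> derived G (carrier G) \<longleftrightarrow> a \<in> derived G (carrier G)"
proof
  assume a: "a \<in> derived G (carrier G)"
  interpret N: subgroup "derived G (carrier G)" G
    by (rule derived_is_subgroup) simp
  show "seq_prods G S \<subseteq> derived G (carrier G)"
  proof
    fix b assume b: "b \<in> seq_prods G S"
    obtain xs ys where "mset xs = S" "lprod G xs = a" "mset ys = S" "lprod G ys = b"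
      using assms(2) b by (auto elim!: seq_prodsE)
    with assms(1) have "b \<otimes> inv a \<in> derived G (carrier G)"
      using lprod_perm_in_derived[of ys xs] by (auto dest: seqs_set_subset)
    with a have "b \<otimes> inv a \<otimes> a \<in> derived G (carrier G)"
      by simp
    moreover have "a \<in> carrier G" "b \<in> carrier G"
      using a b assms(1) seq_prods_subset_carrier by auto
    ultimately show "b \<in> derived G (carrier G)"
      by (simp add: m_assoc)
  qed
qed (use assms(2) in blast)

lemma seq_prods_subset_derived_if_one:
  "S \<in> seqs (carrier G) \<Longrightarrow> \<one> \<in> seq_prods G S \<Longrightarrow> seq_prods G S \<subseteq> derived G (carrier G)"
  using seq_prods_subset_derived_iff by (simp add: derived_is_subgroup subgroup.one_closed)

lemma lprod_rotate_one:
  assumes "set xs \<subseteq> carrier G" "set ys \<subseteq> carrier G" "lprod G (xs @ ys) = \<one>"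
  shows "lprod G (ys @ xs) = \<one>"
  using assms inv_comm[of "lprod G xs" "lprod G ys"] by (simp add: lprod_append)

lemma one_in_seq_prods_add_mset_iff:
  assumes "S \<in> seqs (carrier G)" "x \<in> carrier G"
  shows "\<one> \<in> seq_prods G (add_mset x S) \<longleftrightarrow> inv x \<in> seq_prods G S"
proof
  assume "\<one> \<in> seq_prods G (add_mset x S)"
  then obtain w where w: "mset w = add_mset x S" "lprod G w = \<one>"
    by (rule seq_prodsE)
  have "x \<in> set w"
    using arg_cong[OF w(1), of set_mset] by simp
  then obtain as bs where w_split: "w = as @ x # bs"
    by (meson split_list)
  have carr: "set as \<subseteq> carrier G" "set bs \<subseteq> carrier G"
    using assms w(1) w_split by (auto dest!: seqs_set_subset[rotated])
  have "x \<otimes> lprod G (bs @ as) = \<one>"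
    using lprod_rotate_one[of as "x # bs"] w(2) w_split carr assms(2) by simp
  then have "inv x = lprod G (bs @ as)"
    using carr assms(2) by (intro inv_equality) (auto simp: inv_comm)
  moreover have "mset (bs @ as) = S"
    using w(1) w_split by (simp add: add.commute)
  ultimately show "inv x \<in> seq_prods G S"
    by (metis seq_prodsI)
next
  assume "inv x \<in> seq_prods G S"
  then have "inv x \<otimes> x \<in> seq_prods G (S + {#x#})"
    using assms by (intro seq_prods_add) (auto simp: seq_prods_singleton)
  with assms(2) show "\<one> \<in> seq_prods G (add_mset x S)"
    by simp
qed

lemma seq_prods_subset_if_seq_equiv:
  assumes "S \<in> seqs (carrier G)" "T \<in> seqs (carrier G)" "seq_equiv G S T"
  shows "seq_prods G S \<subseteq> seq_prods G T"
proof
  fix a assume a: "a \<in> seq_prods G S"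
  have a_carr: "a \<in> carrier G"
    using a assms(1) seq_prods_subset_carrier by auto
  have "\<one> \<in> seq_prods G (S + {#inv a#})"
    using one_in_seq_prods_add_mset_iff[OF assms(1), of "inv a"] a a_carr by simp
  then have "S + {#inv a#} \<in> prod_one_seqs G (carrier G)"
    using assms(1) a_carr unfolding prod_one_seqs_def by simp
  then have "T + {#inv a#} \<in> prod_one_seqs G (carrier G)"
    using seq_equivD[OF assms(3), of "{#inv a#}"] a_carr by simp
  then have "\<one> \<in> seq_prods G (add_mset (inv a) T)"
    unfolding prod_one_seqs_def by simp
  then show "a \<in> seq_prods G T"
    using one_in_seq_prods_add_mset_iff[OF assms(2), of "inv a"] a_carr by simp
qed

lemma seq_prods_eq_if_seq_equiv:
  "S \<in> seqs (carrier G) \<Longrightarrow> T \<in> seqs (carrier G) \<Longrightarrow> seq_equiv G S T \<Longrightarrow>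
    seq_prods G S = seq_prods G T"
  by (intro equalityI seq_prods_subset_if_seq_equiv) (auto intro: seq_equiv_sym)

lemma seq_prods_subset_add:
  assumes "S \<in> seqs (carrier G)" "U \<in> seqs (carrier G)" "\<one> \<in> seq_prods G S"
  shows "seq_prods G U \<subseteq> seq_prods G (S + U)"
proof
  fix u assume u: "u \<in> seq_prods G U"
  with assms have "\<one> \<otimes> u \<in> seq_prods G (S + U)"
    by (intro seq_prods_add)
  moreover have "u \<in> carrier G"
    using assms(2) u seq_prods_subset_carrier by auto
  ultimately show "u \<in> seq_prods G (S + U)"
    by simp
qed

lemma subgroup_if_finite_mult_closed:
  assumes "finite (carrier G)" "H \<subseteq> carrier G" "H \<noteq> {}"
    and mult: "\<And>a b. a \<in> H \<Longrightarrow> b \<in> H \<Longrightarrow> a \<otimes> b \<in> H"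
  shows "subgroup H G"
proof (rule subgroupI)
  fix a assume a: "a \<in> H"
  then have a_carr: "a \<in> carrier G"
    using assms(2) by auto
  have pow: "a [^] Suc n \<in> H" for n
    by (induction n) (use a a_carr mult in \<open>auto simp: nat_pow_Suc2[symmetric]\<close>)
  obtain n where n: "ord a = Suc n"
    using ord_ge_1[OF assms(1) a_carr] by (metis Suc_le_D One_nat_def)
  have "a [^] n \<otimes> a = \<one>"
    by (metis a_carr n nat_pow_Suc pow_ord_eq_1)
  then have inv_a: "inv a = a [^] n"
    using a_carr by (intro inv_equality) auto
  show "inv a \<in> H"
  proof (cases n)
    case 0
    with \<open>a [^] n \<otimes> a = \<one>\<close> a_carr have "a = \<one>"
      by simp
    with a inv_a 0 show ?thesis
      by simp
  qed (use inv_a pow in simp)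
qed (use assms in auto)

lemma idempotent_seq_prods_subgroup:
  assumes "finite (carrier G)" "S \<in> seqs (carrier G)" "seq_equiv G (S + S) S"
  shows "subgroup (seq_prods G S) G" "seq_prods G S \<subseteq> derived G (carrier G)"
proof -
  have "seq_prods G (S + S) = seq_prods G S"
    using assms(2,3) by (intro seq_prods_eq_if_seq_equiv) auto
  then show sub: "subgroup (seq_prods G S) G"
    using assms(1,2) seq_prods_add[OF assms(2,2)]
    by (intro subgroup_if_finite_mult_closed seq_prods_subset_carrier seq_prods_nonempty) auto
  then show "seq_prods G S \<subseteq> derived G (carrier G)"
    using seq_prods_subset_derived_if_one[OF assms(2)] subgroup.one_closed by blast
qed

lemma center_if_seq_equiv_empty:
  assumes "T \<in> seqs (carrier G)" "seq_equiv G {#} T" "g \<in># T"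
  shows "g \<in> grp_center G"
proof -
  have g: "g \<in> carrier G"
    using assms(1,3) by (auto simp: seqs_def)
  have "x \<otimes> g = g \<otimes> x" if x: "x \<in> carrier G" for x
  proof -
    define c where "c = g \<otimes> x \<otimes> inv g"
    have c: "c \<in> carrier G"
      using g x by (simp add: c_def)
    obtain R where T: "T = add_mset g R"
      using assms(3) by (metis multi_member_split)
    have R: "R \<in> seqs (carrier G)"
      using assms(1) T by simp
    have "T \<in> prod_one_seqs G (carrier G)"
      using seq_equivD[OF assms(2), of "{#}"] by (simp add: prod_one_seqs_def seq_prods_def)
    then have "inv g \<in> seq_prods G R"
      using one_in_seq_prods_add_mset_iff[OF R g] T by (simp add: prod_one_seqs_def)
    then have "g \<otimes> (x \<otimes> (inv g \<otimes> inv c)) \<in> seq_prods G ({#g#} + ({#x#} + (R + {#inv c#})))"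
      using g x c R
      by (intro seq_prods_add) (auto simp: seq_prods_singleton simp del: union_mset_add_mset_right)
    moreover have "g \<otimes> (x \<otimes> (inv g \<otimes> inv c)) = \<one>"
      using g x unfolding c_def by (simp add: m_assoc[symmetric])
    ultimately have "T + {#x, inv c#} \<in> prod_one_seqs G (carrier G)"
      using assms(1) T x c by (simp add: prod_one_seqs_def add_mset_commute)
    then have "{#x, inv c#} \<in> prod_one_seqs G (carrier G)"
      using seq_equivD[OF assms(2), of "{#x, inv c#}"] x c by simp
    then have "x \<otimes> inv c = \<one> \<or> inv c \<otimes> x = \<one>"
      using x c by (auto simp: prod_one_seqs_def seq_prods_pair)
    then have "x \<otimes> inv c = \<one>"
      using x c inv_comm by blast
    then have "x = g \<otimes> x \<otimes> inv g"
      using inv_solve_right'[of \<one> x c] x c unfolding c_def by simp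
    then show "x \<otimes> g = g \<otimes> x"
      using inv_solve_right[of x "g \<otimes> x" g] g x by simp
  qed
  with g show ?thesis
    by (auto simp: grp_center_def)
qed

lemma seq_equiv_empty_if_central:
  assumes "T \<in> prod_one_seqs G (grp_center G)"
  shows "seq_equiv G {#} T"
  unfolding seq_equiv_def
proof
  fix U assume U: "U \<in> seqs (carrier G)"
  have "\<one> \<in> seq_prods G T"
    using assms by (simp add: prod_one_seqs_def)
  then obtain t where t: "mset t = T" "lprod G t = \<one>"
    by (rule seq_prodsE)
  have t_center: "set t \<subseteq> grp_center G"
    using assms t(1) by (auto simp: prod_one_seqs_def seqs_def)
  then have T: "T \<in> seqs (carrier G)"
    using t(1) grp_center_subset_carrier[of G] by auto
  have "seq_prods G (T + U) = (\<otimes>) \<one> ` seq_prods G U"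
    using seq_prods_add_central[OF t_center U] t by simp
  also have "\<dots> = id ` seq_prods G U"
    using seq_prods_subset_carrier[OF U] by (intro image_cong) auto
  finally show "{#} + U \<in> prod_one_seqs G (carrier G) \<longleftrightarrow> T + U \<in> prod_one_seqs G (carrier G)"
    using T U by (simp add: prod_one_seqs_def)
qed

lemma seq_class_empty: "seq_class G {#} = prod_one_seqs G (grp_center G)"
proof
  show "seq_class G {#} \<subseteq> prod_one_seqs G (grp_center G)"
  proof
    fix T assume "T \<in> seq_class G {#}"
    then have T: "T \<in> seqs (carrier G)" "seq_equiv G {#} T"
      by (auto simp: seq_class_def)
    then have "\<one> \<in> seq_prods G T"
      using seq_equivD[OF T(2), of "{#}"] by (simp add: prod_one_seqs_def seq_prods_def)
    moreover have "set_mset T \<subseteq> grp_center G"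
      using center_if_seq_equiv_empty[OF T] by blast
    ultimately show "T \<in> prod_one_seqs G (grp_center G)"
      by (simp add: prod_one_seqs_def seqs_def)
  qed
  show "prod_one_seqs G (grp_center G) \<subseteq> seq_class G {#}"
  proof
    fix T assume T: "T \<in> prod_one_seqs G (grp_center G)"
    then have "T \<in> seqs (carrier G)"
      using grp_center_subset_carrier[of G] by (auto simp: prod_one_seqs_def seqs_def)
    with seq_equiv_empty_if_central[OF T] show "T \<in> seq_class G {#}"
      by (simp add: seq_class_def)
  qed
qed

lemma replicate_ord_seq_equiv_empty:
  assumes "g \<in> grp_center G"
  shows "seq_equiv G (replicate_mset (ord g) g) {#}"
proof -
  have g: "g \<in> carrier G"
    using assms grp_center_subset_carrier[of G] by auto
  have "lprod G (replicate n g) = g [^] n" for n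
    using g nat_pow_Suc2[OF g] by (induction n) simp_all
  then have "\<one> \<in> seq_prods G (replicate_mset (ord g) g)"
    using g by (intro seq_prodsI[of "replicate (ord g) g"]) auto
  with assms have "replicate_mset (ord g) g \<in> prod_one_seqs G (grp_center G)"
    by (simp add: prod_one_seqs_def seqs_def)
  then show ?thesis
    by (rule seq_equiv_sym[OF seq_equiv_empty_if_central])
qed

lemma commutator_in_seq_prods_of_product_one:
  assumes "a \<in> carrier G" "b \<in> carrier G"
  shows "\<exists>T \<in> seqs (carrier G). \<one> \<in> seq_prods G T \<and> a \<otimes> b \<otimes> inv a \<otimes> inv b \<in> seq_prods G T"
proof (intro bexI conjI)
  show "mset [a, b, inv a, inv b] \<in> seqs (carrier G)"
    using assms by simp
  show "\<one> \<in> seq_prods G (mset [a, b, inv a, inv b])"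
    using assms by (intro seq_prodsI[of "[a, inv a, b, inv b]"]) (simp_all add: m_assoc[symmetric])
  show "a \<otimes> b \<otimes> inv a \<otimes> inv b \<in> seq_prods G (mset [a, b, inv a, inv b])"
    using assms by (intro seq_prodsI[of "[a, b, inv a, inv b]"]) (simp_all add: m_assoc)
qed

lemma derived_in_seq_prods_of_product_one:
  assumes "h \<in> derived G (carrier G)"
  shows "\<exists>T \<in> seqs (carrier G). \<one> \<in> seq_prods G T \<and> h \<in> seq_prods G T"
  using assms unfolding derived_def
proof (induction rule: generate.induct)
  case one
  show ?case
    by (intro bexI[of _ "{#}"]) (auto intro: seq_prodsI[of "[]"])
next
  case (incl h)
  then show ?case
    using commutator_in_seq_prods_of_product_one by blast
next
  case (inv h)
  then obtain a b where ab: "a \<in> carrier G" "b \<in> carrier G" "h = a \<otimes> b \<otimes> inv a \<otimes> inv b"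
    by blast
  then have "inv h = b \<otimes> a \<otimes> inv b \<otimes> inv a"
    by (simp add: m_assoc inv_mult_group)
  then show ?case
    using commutator_in_seq_prods_of_product_one[of b a] ab by simp
next
  case (eng h1 h2)
  then obtain T1 T2 where "T1 \<in> seqs (carrier G)" "\<one> \<in> seq_prods G T1" "h1 \<in> seq_prods G T1"
    and "T2 \<in> seqs (carrier G)" "\<one> \<in> seq_prods G T2" "h2 \<in> seq_prods G T2"
    by blast
  then show ?case
    using seq_prods_add[of T1 T2 \<one> \<one>] seq_prods_add[of T1 T2 h1 h2]
    by (intro bexI[of _ "T1 + T2"]) auto
qed

lemma ex_seq_prods_eq_derived:
  assumes "finite (carrier G)"
  obtains T where "T \<in> seqs (carrier G)" "seq_prods G T = derived G (carrier G)"
proof -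
  have "finite F \<Longrightarrow> F \<subseteq> derived G (carrier G) \<Longrightarrow>
      \<exists>T \<in> seqs (carrier G). \<one> \<in> seq_prods G T \<and> F \<subseteq> seq_prods G T" for F
  proof (induction F rule: finite_induct)
    case empty
    show ?case
      by (intro bexI[of _ "{#}"]) (auto intro: seq_prodsI[of "[]"])
  next
    case (insert h F)
    obtain T1 where T1: "T1 \<in> seqs (carrier G)" "\<one> \<in> seq_prods G T1" "F \<subseteq> seq_prods G T1"
      using insert.IH insert.prems by auto
    obtain T2 where T2: "T2 \<in> seqs (carrier G)" "\<one> \<in> seq_prods G T2" "h \<in> seq_prods G T2"
      using derived_in_seq_prods_of_product_one insert.prems by blast
    have "\<one> \<otimes> \<one> \<in> seq_prods G (T1 + T2)"
      using T1 T2 by (intro seq_prods_add) auto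
    moreover have "F \<subseteq> seq_prods G (T2 + T1)" "h \<in> seq_prods G (T1 + T2)"
      using T1 T2 seq_prods_subset_add by blast+
    ultimately show ?case
      using T1 T2 by (intro bexI[of _ "T1 + T2"]) (auto simp: add.commute)
  qed
  moreover have "finite (derived G (carrier G))"
    using assms derived_in_carrier finite_subset by blast
  ultimately obtain T where T: "T \<in> seqs (carrier G)" "\<one> \<in> seq_prods G T"
    "derived G (carrier G) \<subseteq> seq_prods G T"
    by blast
  moreover have "seq_prods G T \<subseteq> derived G (carrier G)"
    using seq_prods_subset_derived_if_one[OF T(1,2)] .
  ultimately show ?thesis
    using that by blast
qed

lemma seq_prods_add_subset_derived_iff:
  assumes "T \<in> seqs (carrier G)" "U \<in> seqs (carrier G)" "seq_prods G T \<subseteq> derived G (carrier G)"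
  shows "seq_prods G (T + U) \<subseteq> derived G (carrier G) \<longleftrightarrow> seq_prods G U \<subseteq> derived G (carrier G)"
proof -
  interpret N: subgroup "derived G (carrier G)" G
    by (rule derived_is_subgroup) simp
  obtain t u where t: "t \<in> seq_prods G T" and u: "u \<in> seq_prods G U"
    using seq_prods_nonempty by (meson equals0I)
  have t_N: "t \<in> derived G (carrier G)" and "t \<in> carrier G" "u \<in> carrier G"
    using assms t u seq_prods_subset_carrier by auto
  have "t \<otimes> u \<in> derived G (carrier G) \<longleftrightarrow> u \<in> derived G (carrier G)"
  proof
    assume "t \<otimes> u \<in> derived G (carrier G)"
    with t_N have "inv t \<otimes> (t \<otimes> u) \<in> derived G (carrier G)"
      by simp
    with \<open>t \<in> carrier G\<close> \<open>u \<in> carrier G\<close> show "u \<in> derived G (carrier G)"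
      by (simp add: m_assoc[symmetric])
  qed (use t_N in simp)
  moreover have "t \<otimes> u \<in> seq_prods G (T + U)"
    using assms t u by (intro seq_prods_add)
  ultimately show ?thesis
    using seq_prods_subset_derived_iff assms(1,2) t u by simp
qed

lemma add_in_prod_one_seqs_iff:
  assumes "S \<in> seqs (carrier G)" "U \<in> seqs (carrier G)" "seq_prods G S = derived G (carrier G)"
  shows "S + U \<in> prod_one_seqs G (carrier G) \<longleftrightarrow> seq_prods G U \<subseteq> derived G (carrier G)"
proof
  assume "S + U \<in> prod_one_seqs G (carrier G)"
  then have "\<one> \<in> seq_prods G (S + U)"
    by (simp add: prod_one_seqs_def)
  then have "seq_prods G (S + U) \<subseteq> derived G (carrier G)"
    using assms(1,2) by (intro seq_prods_subset_derived_if_one) auto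
  then show "seq_prods G U \<subseteq> derived G (carrier G)"
    using seq_prods_add_subset_derived_iff assms by simp
next
  assume "seq_prods G U \<subseteq> derived G (carrier G)"
  moreover obtain u where u: "u \<in> seq_prods G U"
    using seq_prods_nonempty by (meson equals0I)
  ultimately have "inv u \<in> seq_prods G S"
    using assms(3) by (simp add: derived_is_subgroup subgroup.m_inv_closed subsetD)
  then have "inv u \<otimes> u \<in> seq_prods G (S + U)"
    using assms(1,2) u by (intro seq_prods_add)
  moreover have "u \<in> carrier G"
    using assms(2) u seq_prods_subset_carrier by auto
  ultimately show "S + U \<in> prod_one_seqs G (carrier G)"
    using assms(1,2) by (simp add: prod_one_seqs_def)
qed

lemma seq_equiv_add_if_seq_prods_subset_derived:
  assumes "S \<in> seqs (carrier G)" "T \<in> seqs (carrier G)"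
    and "seq_prods G S = derived G (carrier G)" "seq_prods G T \<subseteq> derived G (carrier G)"
  shows "seq_equiv G (S + T) S"
  unfolding seq_equiv_def
proof
  fix U assume U: "U \<in> seqs (carrier G)"
  have "S + T + U \<in> prod_one_seqs G (carrier G) \<longleftrightarrow> seq_prods G (T + U) \<subseteq> derived G (carrier G)"
    using add_in_prod_one_seqs_iff[of S "T + U"] assms U by (simp add: add.assoc)
  also have "\<dots> \<longleftrightarrow> seq_prods G U \<subseteq> derived G (carrier G)"
    using seq_prods_add_subset_derived_iff assms(2,4) U by blast
  also have "\<dots> \<longleftrightarrow> S + U \<in> prod_one_seqs G (carrier G)"
    using add_in_prod_one_seqs_iff assms(1,3) U by blast
  finally show "S + T + U \<in> prod_one_seqs G (carrier G) \<longleftrightarrow> S + U \<in> prod_one_seqs G (carrier G)" .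
qed

lemma least_idempotent_iff_seq_prods_eq_derived:
  assumes "finite (carrier G)" "S \<in> seqs (carrier G)"
  shows "seq_class G S \<in> class_idems G \<and> (\<forall>f \<in> class_idems G. rees_le G (seq_class G S) f)
    \<longleftrightarrow> seq_prods G S = derived G (carrier G)"
proof
  assume least: "seq_class G S \<in> class_idems G \<and> (\<forall>f \<in> class_idems G. rees_le G (seq_class G S) f)"
  then have idem: "seq_equiv G (S + S) S"
    using seq_class_in_class_idems_iff[OF assms(2)] by blast
  obtain T where T: "T \<in> seqs (carrier G)" "seq_prods G T = derived G (carrier G)"
    using ex_seq_prods_eq_derived[OF assms(1)] .
  have "seq_class G T \<in> class_idems G"
    using T seq_equiv_add_if_seq_prods_subset_derived[OF T(1) T(1)]
    by (simp add: seq_class_in_class_idems_iff)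
  with least have "seq_equiv G (S + T) S"
    using rees_le_seq_class_iff[OF assms(2) T(1)] by blast
  then have "seq_prods G (S + T) = seq_prods G S"
    using assms(2) T(1) by (intro seq_prods_eq_if_seq_equiv) auto
  moreover have "seq_prods G T \<subseteq> seq_prods G (S + T)"
    using idempotent_seq_prods_subgroup(1)[OF assms idem] assms(2) T(1)
    by (intro seq_prods_subset_add) (auto intro: subgroup.one_closed)
  ultimately show "seq_prods G S = derived G (carrier G)"
    using idempotent_seq_prods_subgroup(2)[OF assms idem] T(2) by blast
next
  assume S: "seq_prods G S = derived G (carrier G)"
  have "seq_class G S \<in> class_idems G"
    using seq_equiv_add_if_seq_prods_subset_derived[OF assms(2,2) S] S
    by (simp add: seq_class_in_class_idems_iff[OF assms(2)])
  moreover have "rees_le G (seq_class G S) f" if f: "f \<in> class_idems G" for f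
  proof -
    obtain T where T: "T \<in> seqs (carrier G)" "f = seq_class G T" "seq_equiv G (T + T) T"
      using f by (rule class_idemsE)
    then show ?thesis
      using seq_equiv_add_if_seq_prods_subset_derived[OF assms(2) T(1) S]
        idempotent_seq_prods_subgroup(2)[OF assms(1) T(1,3)] rees_le_seq_class_iff[OF assms(2) T(1)]
      by simp
  qed
  ultimately show "seq_class G S \<in> class_idems G \<and> (\<forall>f \<in> class_idems G. rees_le G (seq_class G S) f)"
    by blast
qed

end

theorem lemma3p7:
  fixes G (structure) and S :: "'a multiset"
  assumes "group G" and "finite (carrier G)" and "S \<in> seqs (carrier G)"
  shows "(seq_class G S \<in> class_idems G \<longrightarrow>
            subgroup (seq_prods G S) G \<and> seq_prods G S \<subseteq> derived G (carrier G))
       \<and> seq_class G {#} = prod_one_seqs G (grp_center G)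
       \<and> (\<forall>g \<in> grp_center G. seq_equiv G (replicate_mset (group.ord G g) g) {#})
       \<and> ((seq_class G S \<in> class_idems G \<and>
             (\<forall>f \<in> class_idems G. rees_le G (seq_class G S) f))
           \<longleftrightarrow> seq_prods G S = derived G (carrier G))"
proof -
  interpret group G
    by (rule assms(1))
  show ?thesis
    using idempotent_seq_prods_subgroup[OF assms(2,3)]
      seq_class_in_class_idems_iff[OF assms(3)] seq_class_empty replicate_ord_seq_equiv_empty
      least_idempotent_iff_seq_prods_eq_derived[OF assms(2,3)]
    by blast
qed

end
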